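(* Let $n\ge 1$. The maximum success probability of any strategy for the New Hats-on-a-line Game with two hat colours and $n$ players is $1-2^{-n}$.
   Context: The New Hats-on-a-line Game with $q$ colours and $n$ players: players $P_1,\dots,P_n$ stand in a line, and each player $P_i$ receives a hat whose colour $c_i$ is chosen uniformly at random from a fixed set of $q$ colours, independently of the other hats. Player $P_i$ sees exactly the hat colours $c_{i+1},\dots,c_n$. The players respond sequentially in the order $P_1,\dots,P_n$; each response is either a colour (a guess of one's own hat colour) or "pass", and each player hears all previous responses. No other communication is allowed, apart from agreeing on a strategy beforehand. A strategy specifies, for each player $P_i$, his response as a function of the colours he sees and the responses he has heard. The players win if at least one player guesses correctly and no player guesses incorrectly; the success probability of a strategy is the probability that the players win. Here $q=2$. *)

theory Defs
  imports Complex_Main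
begin

text \<open>Players P_1..P_n are indexed 0..n-1.
  A hat assignment is a list c of length n (c ! i is the colour of player i).
  A response is an option: None = pass, Some x = guess colour x.
  A strategy assigns to player i a function of the colours he sees
  (drop (i+1) c, i.e. the hats of all later players) and the list of
  responses heard so far (responses of players 0..i-1).\<close>

type_synonym colour = bool
type_synonym response = "colour option"
type_synonym strategy = "nat \<Rightarrow> colour list \<Rightarrow> response list \<Rightarrow> response"

fun responses :: "strategy \<Rightarrow> colour list \<Rightarrow> nat \<Rightarrow> response list" where
  "responses s c 0 = []"
| "responses s c (Suc i) =
     responses s c i @ [s i (drop (Suc i) c) (responses s c i)]"

definition wins :: "nat \<Rightarrow> strategy \<Rightarrow> colour list \<Rightarrow> bool" where
  "wins n s c \<longleftrightarrow>
     (let r = responses s c n in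
       (\<exists>i<n. r ! i = Some (c ! i)) \<and>
       (\<forall>i<n. r ! i \<noteq> None \<longrightarrow> r ! i = Some (c ! i)))"

text \<open>Hats are uniform and independent: every colour list of length n is equally likely.\<close>
definition success_prob :: "nat \<Rightarrow> strategy \<Rightarrow> real" where
  "success_prob n s =
     real (card {c :: colour list. length c = n \<and> wins n s c}) / 2 ^ n"

end

theory Submission
  imports Defs
begin

text \<open>Player P_1 has no information about his own hat, so whatever he does, some assignment
  makes him wrong or pass; in the latter case the others face the same game with one player
  fewer. By induction every strategy loses on at least one of the 2^n assignments. Conversely,
  let the first player who sees only colour False guess True and everyone else pass: this is
  right exactly when some hat is True, so only the all-False assignment is lost. Neither
  direction uses n \<ge> 1.\<close>

lemma length_responses [simp]: "length (responses s c i) = i"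
  by (induction i) auto

definition tail_strategy :: "strategy \<Rightarrow> response \<Rightarrow> strategy" where
  "tail_strategy s a = (\<lambda>j v r. s (Suc j) v (a # r))"

lemma responses_Cons:
  "responses s (x # t) (Suc i) = s 0 t [] # responses (tail_strategy s (s 0 t [])) t i"
  by (induction i) (auto simp: tail_strategy_def)

lemma wins_Cons:
  "wins (Suc m) s (x # t) \<longleftrightarrow>
    (let a = s 0 t []; r = responses (tail_strategy s a) t m in
      (a = Some x \<or> (\<exists>i<m. r ! i = Some (t ! i))) \<and> (a \<noteq> None \<longrightarrow> a = Some x) \<and>
      (\<forall>i<m. r ! i \<noteq> None \<longrightarrow> r ! i = Some (t ! i)))"
  unfolding wins_def Let_def responses_Cons All_less_Suc2 Ex_less_Suc2 nth_Cons_0 nth_Cons_Suc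
  by auto

lemma wins_Cons_pass:
  "s 0 t [] = None \<Longrightarrow> wins (Suc m) s (x # t) \<longleftrightarrow> wins m (tail_strategy s None) t"
  unfolding wins_Cons by (simp add: wins_def)

lemma exists_losing_assignment: "\<exists>c. length c = n \<and> \<not> wins n s c"
proof (induction n arbitrary: s)
  case 0
  show ?case by (auto simp: wins_def)
next
  case (Suc m)
  show ?case
  proof (cases "\<exists>t y. length t = m \<and> s 0 t [] = Some y")
    case True
    then obtain t y where "length t = m" "s 0 t [] = Some y" by blast
    then show ?thesis
      by (intro exI[of _ "(\<not> y) # t"]) (auto simp: wins_Cons Let_def)
  next
    case False
    obtain t where "length t = m" "\<not> wins m (tail_strategy s None) t"
      using Suc.IH by blast
    with False show ?thesis
      by (intro exI[of _ "False # t"]) (auto simp: wins_Cons_pass)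
  qed
qed

definition last_true_strategy :: strategy where
  "last_true_strategy i v r =
     (if (\<forall>a \<in> set r. a = None) \<and> (\<forall>b \<in> set v. \<not> b) then Some True else None)"

lemma responses_all_pass: "responses (\<lambda>_ _ _. None) t i = replicate i None"
  by (induction i) (auto simp: replicate_append_same)

lemma wins_last_true_strategy_iff:
  "length c = n \<Longrightarrow> wins n last_true_strategy c \<longleftrightarrow> c \<noteq> replicate n False"
proof (induction n arbitrary: c)
  case 0
  then show ?case by (auto simp: wins_def)
next
  case (Suc m)
  then obtain x t where c: "c = x # t" and t: "length t = m" by (cases c) auto
  show ?case
  proof (cases "\<forall>b \<in> set t. \<not> b")
    case True
    then have "t = replicate m False"
      using t by (metis (full_types) replicate_length_same)
    moreover have "tail_strategy last_true_strategy (Some True) = (\<lambda>_ _ _. None)"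
      by (auto simp: tail_strategy_def last_true_strategy_def fun_eq_iff)
    moreover have "last_true_strategy 0 t [] = Some True"
      using True by (simp add: last_true_strategy_def)
    ultimately show ?thesis
      using t by (auto simp: c wins_Cons Let_def responses_all_pass)
  next
    case False
    have "tail_strategy last_true_strategy None = last_true_strategy"
      by (auto simp: tail_strategy_def last_true_strategy_def fun_eq_iff)
    moreover have "last_true_strategy 0 t [] = None"
      using False by (auto simp: last_true_strategy_def)
    moreover have "t \<noteq> replicate m False"
      using False by auto
    ultimately show ?thesis
      using Suc.IH[OF t] by (simp add: c wins_Cons_pass)
  qed
qed

lemma card_bool_lists_length: "card {c :: bool list. length c = n} = 2 ^ n"
  using card_lists_length_eq[of "UNIV :: bool set" n] by simp

lemma success_prob_eq_one_minus_losses: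
  "success_prob n s = 1 - real (card {c. length c = n \<and> \<not> wins n s c}) / 2 ^ n"
proof -
  let ?W = "{c. length c = n \<and> wins n s c}" and ?L = "{c. length c = n \<and> \<not> wins n s c}"
  have fin: "finite {c :: bool list. length c = n}"
    using finite_lists_length_eq[of "UNIV :: bool set" n] by simp
  have "card ?W + card ?L = card (?W \<union> ?L)"
    by (rule card_Un_disjoint[symmetric]) (auto intro: finite_subset[OF _ fin])
  also have "?W \<union> ?L = {c. length c = n}"
    by blast
  finally have "real (card ?W) + real (card ?L) = 2 ^ n"
    unfolding card_bool_lists_length by (metis of_nat_add of_nat_numeral of_nat_power)
  then show ?thesis
    unfolding success_prob_def by (simp add: field_simps)
qed

theorem theorem2:
  fixes n :: nat
  assumes "n \<ge> 1"
  shows "(\<forall>s. success_prob n s \<le> 1 - 1 / 2 ^ n) \<and>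
         (\<exists>s. success_prob n s = 1 - 1 / 2 ^ n)"
proof
  show "\<forall>s. success_prob n s \<le> 1 - 1 / 2 ^ n"
  proof
    fix s
    have "finite {c :: bool list. length c = n \<and> \<not> wins n s c}"
      using finite_lists_length_eq[of "UNIV :: bool set" n] by (simp add: finite_subset)
    moreover have "{c. length c = n \<and> \<not> wins n s c} \<noteq> {}"
      using exists_losing_assignment by blast
    ultimately have "1 \<le> card {c. length c = n \<and> \<not> wins n s c}"
      by (simp add: Suc_le_eq card_gt_0_iff)
    then show "success_prob n s \<le> 1 - 1 / 2 ^ n"
      unfolding success_prob_eq_one_minus_losses by (simp add: divide_right_mono)
  qed
next
  have "{c. length c = n \<and> \<not> wins n last_true_strategy c} = {replicate n False}"
    using wins_last_true_strategy_iff[of _ n] by fastforce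
  then show "\<exists>s. success_prob n s = 1 - 1 / 2 ^ n"
    by (intro exI[of _ last_true_strategy]) (simp add: success_prob_eq_one_minus_losses)
qed

end
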